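(* Let $ABC$ be a triangle with circumcenter $O$, let $l$ be a line in its plane, and let $T$ be the foot of the perpendicular from $O$ to $l$. Let $R$ and $S$ be variable points on $l$ satisfying $TS = TR$, and let $S', R'$ be the isogonal conjugates of $S, R$ with respect to $ABC$. Then, as $S, R$ vary on $l$, the line $S'R'$ remains parallel to a fixed line. *)

theory Defs
  imports "HOL-Analysis.Analysis"
begin

definition reflect_line :: "complex \<Rightarrow> complex \<Rightarrow> complex \<Rightarrow> complex" where
  "reflect_line a u x = a + (u / cnj u) * cnj (x - a)"

definition bisector_dir :: "complex \<Rightarrow> complex \<Rightarrow> complex \<Rightarrow> complex" where
  "bisector_dir A B C = (B - A) / complex_of_real (cmod (B - A)) + (C - A) / complex_of_real (cmod (C - A))"

definition line_through :: "complex \<Rightarrow> complex \<Rightarrow> complex set" where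
  "line_through p q = {x. collinear {p, q, x}}"

definition isogonal_conjugate :: "complex \<Rightarrow> complex \<Rightarrow> complex \<Rightarrow> complex \<Rightarrow> complex \<Rightarrow> bool" where
  "isogonal_conjugate A B C P Q \<longleftrightarrow>
     P \<notin> line_through A B \<and> P \<notin> line_through B C \<and> P \<notin> line_through C A \<and>
     Q \<in> line_through A (reflect_line A (bisector_dir A B C) P) \<and>
     Q \<in> line_through B (reflect_line B (bisector_dir B C A) P) \<and>
     Q \<in> line_through C (reflect_line C (bisector_dir C A B) P)"

end

theory Submission
  imports Defs
begin

text \<open>Normalise the circumcircle to the unit circle and let s1, s2, s3 be the elementary
  symmetric functions of the vertices a, b, c. The condition that q lies on the reflection of the
  line ap in the bisector at a is a cubic equation in a whose coefficients do not depend on the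
  vertex; since two vertices are roots, comparing coefficients gives
  p + q + s3 cnj p cnj q = s1 and p q + s3 (cnj p + cnj q) = s2, and eliminating cnj q yields
  q (|p|^2 - 1) = N(p) with N(p) = s2 cnj p - s1 - s3 (cnj p)^2 + p.
  The points s, r = t +- mu u of l are equidistant from the centre because t is orthogonal to u, so
  (s' - r') (|s|^2 - 1) = N(s) - N(r) = 2 mu (s2 cnj u - 2 s3 cnj t cnj u + u),
  a real multiple of a vector independent of mu. Finally s' \<noteq> r', since a common conjugate of
  two points would lie on the circumcircle, i.e. at a vertex.\<close>

lemma collinear_iff_Im_cnj: "collinear {x, y, z} \<longleftrightarrow> Im ((z - x) * cnj (y - x)) = 0"
proof -
  have "collinear {x, y, z} \<longleftrightarrow> collinear {0, y - x, z - x}"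
    using collinear_3[of y x z] by (simp add: insert_commute)
  also have "\<dots> \<longleftrightarrow> (z - x) / (y - x) \<in> \<real>"
    by (rule collinear_iff_Reals)
  also have "\<dots> \<longleftrightarrow> Im ((z - x) * cnj (y - x)) = 0"
    by (simp add: complex_is_Real_iff Im_complex_div_eq_0)
  finally show ?thesis .
qed

lemma line_through_param:
  assumes "p \<noteq> q" "x \<in> line_through p q"
  shows "\<exists>\<mu>::real. x = p + of_real \<mu> * (q - p)"
proof -
  have "Im ((x - p) / (q - p)) = 0"
    using assms(2) by (simp add: line_through_def collinear_iff_Im_cnj Im_complex_div_eq_0)
  then have "(x - p) / (q - p) = of_real (Re ((x - p) / (q - p)))"
    by (simp add: complex_eq_iff)
  then have "x = p + of_real (Re ((x - p) / (q - p))) * (q - p)"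
    using assms(1) by (simp add: field_simps)
  then show ?thesis ..
qed

lemma line_through_equidistant:
  assumes "p \<noteq> q" "T \<in> line_through p q" "S \<in> line_through p q" "R \<in> line_through p q"
    and "dist T S = dist T R" "S \<noteq> R"
  shows "\<exists>\<mu>::real. \<mu> \<noteq> 0 \<and> S = T + of_real \<mu> * (q - p) \<and> R = T - of_real \<mu> * (q - p)"
proof -
  obtain \<tau> \<sigma> \<rho> where T: "T = p + of_real \<tau> * (q - p)" and S: "S = p + of_real \<sigma> * (q - p)"
    and R: "R = p + of_real \<rho> * (q - p)"
    using line_through_param assms(1-4) by metis
  have "dist T (p + of_real m * (q - p)) = \<bar>m - \<tau>\<bar> * cmod (q - p)" for m
  proof -
    have "T - (p + of_real m * (q - p)) = of_real (\<tau> - m) * (q - p)"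
      unfolding T by (simp add: algebra_simps)
    then show ?thesis
      by (simp only: dist_norm norm_mult norm_of_real abs_minus_commute)
  qed
  then have "\<bar>\<sigma> - \<tau>\<bar> = \<bar>\<rho> - \<tau>\<bar>"
    using assms(1,5) unfolding S R by simp
  moreover have "\<sigma> \<noteq> \<rho>"
    using assms(6) unfolding S R by auto
  ultimately have \<rho>: "\<rho> = \<tau> - (\<sigma> - \<tau>)" and "\<sigma> - \<tau> \<noteq> 0"
    by (auto simp: abs_if split: if_splits)
  then show ?thesis
    unfolding S R T \<rho> by (intro exI[of _ "\<sigma> - \<tau>"]) (simp add: algebra_simps)
qed

lemma unit_add_eq_mult_cnj:
  assumes "cmod e1 = 1" "cmod e2 = 1"
  shows "e1 + e2 = e1 * e2 * cnj (e1 + e2)"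
proof -
  have "e1 * cnj e1 = 1" "e2 * cnj e2 = 1"
    using assms complex_norm_square[of e1] complex_norm_square[of e2] by simp_all
  moreover have "e1 * e2 * cnj (e1 + e2) = e2 * (e1 * cnj e1) + e1 * (e2 * cnj e2)"
    by (simp add: algebra_simps)
  ultimately show ?thesis by simp
qed

lemma bisector_dir_nonzero:
  assumes "\<not> collinear {A, B, C}"
  shows "bisector_dir A B C \<noteq> 0"
proof
  assume "bisector_dir A B C = 0"
  moreover have "A \<noteq> B" "A \<noteq> C"
    using assms by (auto simp: insert_commute)
  moreover define \<kappa> where "\<kappa> = cmod (C - A) / cmod (B - A)"
  ultimately have "(C - A) / of_real (cmod (C - A)) = - ((B - A) / of_real (cmod (B - A)))"
    unfolding bisector_dir_def by (metis add_eq_0_iff)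
  then have "C - A = - of_real \<kappa> * (B - A)"
    using \<open>A \<noteq> B\<close> \<open>A \<noteq> C\<close> unfolding \<kappa>_def by (simp add: divide_simps) (simp add: algebra_simps)
  then have "(C - A) * cnj (B - A) = - of_real \<kappa> * ((B - A) * cnj (B - A))"
    by (simp add: mult.assoc)
  then have "Im ((C - A) * cnj (B - A)) = 0"
    unfolding complex_norm_square[symmetric] by (metis Im_complex_of_real of_real_minus of_real_mult)
  then show False
    using assms by (simp add: collinear_iff_Im_cnj)
qed

text \<open>The lines xp and xq are mirror images in the bisector of the angle yxz, i.e.
  arg (q - x) + arg (p - x) = arg (y - x) + arg (z - x) modulo pi.\<close>

definition isogonal_at :: "complex \<Rightarrow> complex \<Rightarrow> complex \<Rightarrow> complex \<Rightarrow> complex \<Rightarrow> bool" where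
  "isogonal_at x y z p q \<longleftrightarrow> Im ((q - x) * (p - x) * cnj ((y - x) * (z - x))) = 0"

lemma isogonal_at_if_on_reflected_line:
  assumes "\<not> collinear {A, B, C}"
    and "Q \<in> line_through A (reflect_line A (bisector_dir A B C) P)"
  shows "isogonal_at A B C P Q"
proof -
  have "A \<noteq> B" "A \<noteq> C"
    using assms(1) by (auto simp: insert_commute)
  define e1 where "e1 = (B - A) / of_real (cmod (B - A))"
  define e2 where "e2 = (C - A) / of_real (cmod (C - A))"
  define u where "u = bisector_dir A B C"
  have "cmod e1 = 1" "cmod e2 = 1"
    using \<open>A \<noteq> B\<close> \<open>A \<noteq> C\<close> by (simp_all add: e1_def e2_def norm_divide)
  then have u: "u = e1 * e2 * cnj u"
    unfolding u_def bisector_dir_def e1_def e2_def by (rule unit_add_eq_mult_cnj)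
  have "cnj u \<noteq> 0"
    using bisector_dir_nonzero[OF assms(1)] by (simp add: u_def)
  then have "u / cnj u = e1 * e2"
    using u by (simp add: field_simps)
  then have "reflect_line A u P - A = e1 * e2 * cnj (P - A)"
    by (simp add: reflect_line_def)
  moreover have "Im ((Q - A) * cnj (reflect_line A u P - A)) = 0"
    using assms(2) by (simp add: u_def line_through_def collinear_iff_Im_cnj)
  ultimately have "Im ((Q - A) * (P - A) * (cnj e1 * cnj e2)) = 0"
    by (simp add: mult_ac)
  moreover have "cnj e1 * cnj e2 = cnj ((B - A) * (C - A)) / of_real (cmod (B - A) * cmod (C - A))"
    by (simp add: e1_def e2_def)
  ultimately have "Im ((Q - A) * (P - A) * cnj ((B - A) * (C - A))) / (cmod (B - A) * cmod (C - A)) = 0"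
    by (metis Im_divide_of_real times_divide_eq_right)
  then show ?thesis
    using \<open>A \<noteq> B\<close> \<open>A \<noteq> C\<close> by (simp add: isogonal_at_def)
qed

lemma isogonal_conjugate_isogonal_at:
  assumes "\<not> collinear {A, B, C}" "isogonal_conjugate A B C P Q"
  shows "isogonal_at A B C P Q" "isogonal_at B C A P Q" "isogonal_at C A B P Q"
proof -
  have "\<not> collinear {B, C, A}" "\<not> collinear {C, A, B}"
    using assms(1) by (simp_all add: insert_commute)
  then show "isogonal_at A B C P Q" "isogonal_at B C A P Q" "isogonal_at C A B P Q"
    using assms isogonal_at_if_on_reflected_line unfolding isogonal_conjugate_def by blast+
qed

lemma isogonal_at_opposite_vertex:
  "isogonal_at y z x p x \<longleftrightarrow> x = y \<or> collinear {y, z, p}"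
proof -
  have eq: "(x - y) * (p - y) * cnj ((z - y) * (x - y)) = of_real (cmod (x - y) ^ 2) * ((p - y) * cnj (z - y))"
    by (simp only: complex_norm_square complex_cnj_mult mult_ac)
  have "Im ((x - y) * (p - y) * cnj ((z - y) * (x - y))) = cmod (x - y) ^ 2 * Im ((p - y) * cnj (z - y))"
    unfolding eq by simp
  then show ?thesis
    unfolding isogonal_at_def collinear_iff_Im_cnj by simp
qed

lemma isogonal_conjugate_not_vertex:
  assumes "\<not> collinear {A, B, C}" "isogonal_conjugate A B C P Q"
  shows "P \<notin> {A, B, C}" "Q \<notin> {A, B, C}"
proof -
  have "A \<noteq> B" "B \<noteq> C" "C \<noteq> A"
    using assms(1) by (auto simp: insert_commute)
  moreover have "\<not> collinear {A, B, P}" "\<not> collinear {B, C, P}" "\<not> collinear {C, A, P}"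
    using assms(2) by (simp_all add: isogonal_conjugate_def line_through_def insert_commute)
  ultimately show "P \<notin> {A, B, C}" "Q \<notin> {A, B, C}"
    using isogonal_conjugate_isogonal_at[OF assms] isogonal_at_opposite_vertex
    by (auto simp: insert_commute)
qed

lemma isogonal_at_similarity:
  assumes "\<And>z w. f z - f w = \<alpha> * (z - w)" "\<alpha> \<noteq> 0"
  shows "isogonal_at (f x) (f y) (f z) (f p) (f q) \<longleftrightarrow> isogonal_at x y z p q"
proof -
  have "\<alpha> * \<alpha> * cnj (\<alpha> * \<alpha>) = of_real (cmod \<alpha> ^ 2) ^ 2"
    unfolding complex_norm_square by (simp add: power2_eq_square mult_ac)
  then have "(f q - f x) * (f p - f x) * cnj ((f y - f x) * (f z - f x))
      = of_real (cmod \<alpha> ^ 4) * ((q - x) * (p - x) * cnj ((y - x) * (z - x)))"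
    unfolding assms(1) complex_cnj_mult by (simp add: mult_ac)
  then have "Im ((f q - f x) * (f p - f x) * cnj ((f y - f x) * (f z - f x)))
      = cmod \<alpha> ^ 4 * Im ((q - x) * (p - x) * cnj ((y - x) * (z - x)))"
    by simp
  then show ?thesis
    using assms(2) unfolding isogonal_at_def by simp
qed

definition isogonal_eqs :: "complex \<Rightarrow> complex \<Rightarrow> complex \<Rightarrow> complex \<Rightarrow> complex \<Rightarrow> bool" where
  "isogonal_eqs a b c p q \<longleftrightarrow>
     p + q + a*b*c * cnj p * cnj q = a + b + c \<and>
     p * q + a*b*c * (cnj p + cnj q) = a*b + b*c + c*a"

definition isogonal_num :: "complex \<Rightarrow> complex \<Rightarrow> complex \<Rightarrow> complex \<Rightarrow> complex" where
  "isogonal_num a b c p = (a*b + b*c + c*a) * cnj p - (a + b + c) - a*b*c * cnj p ^ 2 + p"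

definition isogonal_dir :: "complex \<Rightarrow> complex \<Rightarrow> complex \<Rightarrow> complex \<Rightarrow> complex \<Rightarrow> complex" where
  "isogonal_dir a b c t u = (a*b + b*c + c*a) * cnj u - 2 * (a*b*c) * cnj t * cnj u + u"

lemma isogonal_at_unit_circle:
  assumes "cmod a = 1" "cmod b = 1" "cmod c = 1" "a \<noteq> b" "a \<noteq> c"
    and "isogonal_at a b c p q"
  shows "a^3 - a^2 * (p + q + a*b*c * cnj p * cnj q) + a * (p * q + a*b*c * (cnj p + cnj q)) - a*b*c = 0"
proof -
  have unit: "a * cnj a = 1" "b * cnj b = 1" "c * cnj c = 1"
    using assms(1-3) complex_norm_square[of a] complex_norm_square[of b] complex_norm_square[of c]
    by simp_all
  have "cnj w = w" if "Im w = 0" for w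
    using that by (simp add: complex_eq_iff)
  then have "cnj ((q - a) * (p - a) * cnj ((b - a) * (c - a))) = (q - a) * (p - a) * cnj ((b - a) * (c - a))"
    using assms(6) unfolding isogonal_at_def by blast
  then have "(cnj q - cnj a) * (cnj p - cnj a) * ((b - a) * (c - a))
      = (q - a) * (p - a) * ((cnj b - cnj a) * (cnj c - cnj a))"
    by simp
  then have "(a - b) * (a - c) * ((q - a) * (p - a) - b * c * (a * cnj q - 1) * (a * cnj p - 1)) = 0"
    using unit by algebra
  then have "(q - a) * (p - a) - b * c * (a * cnj q - 1) * (a * cnj p - 1) = 0"
    using assms(4,5) by simp
  moreover have "a^3 - a^2 * (p + q + a*b*c * cnj p * cnj q) + a * (p * q + a*b*c * (cnj p + cnj q)) - a*b*c
      = a * ((q - a) * (p - a) - b * c * (a * cnj q - 1) * (a * cnj p - 1))"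
    by algebra
  ultimately show ?thesis
    by simp
qed

text \<open>The constant term abc forces c to be the third root of the cubic.\<close>

lemma cubic_coeffs_from_two_roots:
  fixes a b c X Y :: "'a :: field"
  assumes "a \<noteq> b" "a \<noteq> 0" "b \<noteq> 0"
    and "a^3 - a^2 * X + a * Y - a*b*c = 0" "b^3 - b^2 * X + b * Y - a*b*c = 0"
  shows "X = a + b + c" "Y = a*b + b*c + c*a"
proof -
  have "a * (a * (a + b + c - X) + (Y - (a*b + b*c + c*a))) = 0"
    using assms(4) by algebra
  then have a: "a * (a + b + c - X) + (Y - (a*b + b*c + c*a)) = 0"
    using assms(2) by simp
  have "b * (b * (a + b + c - X) + (Y - (a*b + b*c + c*a))) = 0"
    using assms(5) by algebra
  then have "b * (a + b + c - X) + (Y - (a*b + b*c + c*a)) = 0"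
    using assms(3) by simp
  then have "(a - b) * (a + b + c - X) = 0"
    using a by algebra
  then show "X = a + b + c"
    using assms(1) by simp
  then show "Y = a*b + b*c + c*a"
    using a by simp
qed

lemma isogonal_eqs_if_isogonal_at:
  assumes "cmod a = 1" "cmod b = 1" "cmod c = 1" "a \<noteq> b" "b \<noteq> c" "c \<noteq> a"
    and "isogonal_at a b c p q" "isogonal_at b c a p q"
  shows "isogonal_eqs a b c p q"
proof -
  have bca: "b*c*a = a*b*c"
    by (simp add: mult_ac)
  have "b^3 - b^2 * (p + q + b*c*a * cnj p * cnj q) + b * (p * q + b*c*a * (cnj p + cnj q)) - b*c*a = 0"
    using isogonal_at_unit_circle[of b c a p q] assms by simp
  then have b: "b^3 - b^2 * (p + q + a*b*c * cnj p * cnj q) + b * (p * q + a*b*c * (cnj p + cnj q)) - a*b*c = 0"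
    unfolding bca .
  have a: "a^3 - a^2 * (p + q + a*b*c * cnj p * cnj q) + a * (p * q + a*b*c * (cnj p + cnj q)) - a*b*c = 0"
    using isogonal_at_unit_circle[of a b c p q] assms by simp
  have "a \<noteq> 0" "b \<noteq> 0"
    using assms(1,2) by auto
  from cubic_coeffs_from_two_roots[OF \<open>a \<noteq> b\<close> this a b] show ?thesis
    unfolding isogonal_eqs_def by simp
qed

lemma isogonal_eqs_commute: "isogonal_eqs a b c p q \<longleftrightarrow> isogonal_eqs a b c q p"
  unfolding isogonal_eqs_def by (simp add: algebra_simps)

lemma isogonal_eqs_solve:
  assumes "isogonal_eqs a b c p q"
  shows "q * (p * cnj p - 1) = isogonal_num a b c p"
proof -
  have "q * (p * cnj p - 1) - isogonal_num a b c p
      = cnj p * (p * q + a*b*c * (cnj p + cnj q) - (a*b + b*c + c*a))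
        - (p + q + a*b*c * cnj p * cnj q - (a + b + c))"
    by (simp add: isogonal_num_def algebra_simps power2_eq_square)
  then show ?thesis
    using assms by (simp add: isogonal_eqs_def)
qed

lemma isogonal_num_unit_circle:
  assumes "p * cnj p = 1"
  shows "p^2 * isogonal_num a b c p = (p - a) * (p - b) * (p - c)"
  using assms unfolding isogonal_num_def by algebra

lemma isogonal_eqs_unit_circle_vertex:
  assumes "isogonal_eqs a b c p q" "cmod p = 1"
  shows "p \<in> {a, b, c}"
proof -
  have "p * cnj p = 1"
    using assms(2) complex_norm_square[of p] by simp
  then have "isogonal_num a b c p = 0"
    using isogonal_eqs_solve[OF assms(1)] by simp
  then have "(p - a) * (p - b) * (p - c) = 0"
    using isogonal_num_unit_circle[OF \<open>p * cnj p = 1\<close>, of a b c] by simp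
  then show ?thesis
    by auto
qed

lemma isogonal_eqs_common_conjugate:
  assumes "a*b*c \<noteq> 0" "isogonal_eqs a b c p q" "isogonal_eqs a b c r q" "p \<noteq> r"
  shows "q \<in> {a, b, c}"
proof -
  have "a*b*c * (cnj p - cnj r) * (q * cnj q - 1)
      = q * ((p + q + a*b*c * cnj p * cnj q) - (r + q + a*b*c * cnj r * cnj q))
        - ((p * q + a*b*c * (cnj p + cnj q)) - (r * q + a*b*c * (cnj r + cnj q)))"
    by (simp add: algebra_simps)
  also have "\<dots> = 0"
    using assms(2,3) by (simp add: isogonal_eqs_def)
  finally have "q * cnj q = 1"
    using assms(1,4) by simp
  then have "cmod q ^ 2 = 1"
    by (metis complex_norm_square of_real_eq_1_iff)
  then have "cmod q = 1"
    using norm_ge_zero[of q] by (auto simp: power2_eq_1_iff)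
  then show ?thesis
    using isogonal_eqs_unit_circle_vertex assms(2) isogonal_eqs_commute by blast
qed

lemma isogonal_num_diff:
  "isogonal_num a b c (t + of_real \<mu> * u) - isogonal_num a b c (t - of_real \<mu> * u)
     = 2 * of_real \<mu> * isogonal_dir a b c t u"
  by (simp add: isogonal_num_def isogonal_dir_def algebra_simps power2_eq_square)

lemma isogonal_eqs_symmetric_points:
  assumes "cmod a = 1" "cmod b = 1" "cmod c = 1" "t \<bullet> u = 0" "\<mu> \<noteq> 0" "u \<noteq> 0"
    and "isogonal_eqs a b c (t + of_real \<mu> * u) s'" "isogonal_eqs a b c (t - of_real \<mu> * u) r'"
    and "t + of_real \<mu> * u \<notin> {a, b, c}" "s' \<notin> {a, b, c}"
  shows "s' \<noteq> r' \<and> (\<exists>k::real. s' - r' = k *\<^sub>R isogonal_dir a b c t u)"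
proof -
  define s r where "s = t + of_real \<mu> * u" and "r = t - of_real \<mu> * u"
  have eqs: "isogonal_eqs a b c s s'" "isogonal_eqs a b c r r'"
    using assms(7,8) by (simp_all add: s_def r_def)
  have "t \<bullet> (of_real \<mu> * u) = \<mu> * (t \<bullet> u)" "t \<bullet> (- (of_real \<mu> * u)) = - \<mu> * (t \<bullet> u)"
    by (simp_all add: inner_complex_def algebra_simps)
  then have "orthogonal t (of_real \<mu> * u)" "orthogonal t (- (of_real \<mu> * u))"
    using assms(4) by (simp_all add: orthogonal_def)
  then have "cmod s ^ 2 = cmod t ^ 2 + cmod (of_real \<mu> * u) ^ 2"
    "cmod r ^ 2 = cmod t ^ 2 + cmod (- (of_real \<mu> * u)) ^ 2"
    unfolding s_def r_def diff_conv_add_uminus by (simp_all only: norm_add_Pythagorean)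
  then have norms: "r * cnj r = s * cnj s"
    by (simp add: complex_norm_square[symmetric])
  have "cmod s \<noteq> 1"
    using isogonal_eqs_unit_circle_vertex eqs(1) assms(9) s_def by blast
  then have "cmod s ^ 2 \<noteq> 1"
    using norm_ge_zero[of s] unfolding power2_eq_1_iff by linarith
  define \<delta> where "\<delta> = cmod s ^ 2 - 1"
  have D: "s * cnj s - 1 = of_real \<delta>" "\<delta> \<noteq> 0"
    using \<open>cmod s ^ 2 \<noteq> 1\<close> by (simp_all add: \<delta>_def complex_norm_square[symmetric])
  have "(s' - r') * (s * cnj s - 1) = s' * (s * cnj s - 1) - r' * (r * cnj r - 1)"
    using norms by (simp add: algebra_simps)
  also have "\<dots> = isogonal_num a b c s - isogonal_num a b c r"
    using isogonal_eqs_solve[OF eqs(1)] isogonal_eqs_solve[OF eqs(2)] by simp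
  also have "\<dots> = 2 * of_real \<mu> * isogonal_dir a b c t u"
    unfolding s_def r_def by (rule isogonal_num_diff)
  finally have "(s' - r') * of_real \<delta> = 2 * of_real \<mu> * isogonal_dir a b c t u"
    unfolding D(1) .
  then have "s' - r' = (2 * \<mu> / \<delta>) *\<^sub>R isogonal_dir a b c t u"
    using D(2) by (simp add: scaleR_conv_of_real field_simps)
  moreover have "s' \<noteq> r'"
  proof
    assume "s' = r'"
    moreover have "a*b*c \<noteq> 0" "s \<noteq> r"
      using assms(1-3,5,6) by (auto simp: s_def r_def)
    ultimately show False
      using isogonal_eqs_common_conjugate eqs assms(10) by blast
  qed
  ultimately show ?thesis
    by blast
qed

lemma isogonal_conjugates_symmetric_points:
  fixes A B C Oc T u S' R' :: complex and \<rho> \<mu> :: real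
  defines "nm \<equiv> \<lambda>z. (z - Oc) / of_real \<rho>"
  assumes nc: "\<not> collinear {A, B, C}"
    and "dist Oc A = \<rho>" "dist Oc B = \<rho>" "dist Oc C = \<rho>"
    and "(Oc - T) \<bullet> u = 0" "\<mu> \<noteq> 0" "u \<noteq> 0"
    and S': "isogonal_conjugate A B C (T + of_real \<mu> * u) S'"
    and R': "isogonal_conjugate A B C (T - of_real \<mu> * u) R'"
  shows "S' \<noteq> R' \<and> (\<exists>k::real. S' - R' = k *\<^sub>R isogonal_dir (nm A) (nm B) (nm C) (nm T) u)"
proof -
  have "A \<noteq> B" "B \<noteq> C" "C \<noteq> A"
    using nc by (auto simp: insert_commute)
  then have "\<rho> > 0"
    using assms(3,4) zero_less_dist_iff by fastforce
  have sim: "nm z - nm w = inverse (of_real \<rho>) * (z - w)" for z w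
    by (simp add: nm_def divide_inverse_commute algebra_simps)
  have nm_eq_iff: "nm z = nm w \<longleftrightarrow> z = w" for z w
    using \<open>\<rho> > 0\<close> by (auto simp: nm_def)
  have unit: "cmod (nm A) = 1" "cmod (nm B) = 1" "cmod (nm C) = 1"
    using assms(3-5) \<open>\<rho> > 0\<close> by (simp_all add: nm_def norm_divide dist_norm norm_minus_commute)
  have "nm T \<bullet> u = - ((Oc - T) \<bullet> u) / \<rho>"
    using \<open>\<rho> > 0\<close> by (simp add: nm_def inner_complex_def field_simps)
  then have "nm T \<bullet> u = 0"
    using assms(6) by simp
  have shift: "nm (T + of_real \<mu> * u) = nm T + of_real (\<mu> / \<rho>) * u"
    "nm (T - of_real \<mu> * u) = nm T - of_real (\<mu> / \<rho>) * u"
    using \<open>\<rho> > 0\<close> by (simp_all add: nm_def field_simps)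
  have conj: "isogonal_eqs (nm A) (nm B) (nm C) (nm P) (nm Q) \<and> nm P \<notin> {nm A, nm B, nm C} \<and>
      nm Q \<notin> {nm A, nm B, nm C}" if "isogonal_conjugate A B C P Q" for P Q
  proof -
    have "inverse (of_real \<rho>) \<noteq> (0::complex)"
      using \<open>\<rho> > 0\<close> by simp
    then have "isogonal_at (nm A) (nm B) (nm C) (nm P) (nm Q)" "isogonal_at (nm B) (nm C) (nm A) (nm P) (nm Q)"
      using isogonal_conjugate_isogonal_at[OF nc that] isogonal_at_similarity[OF sim] by blast+
    moreover have "nm A \<noteq> nm B" "nm B \<noteq> nm C" "nm C \<noteq> nm A"
      using \<open>A \<noteq> B\<close> \<open>B \<noteq> C\<close> \<open>C \<noteq> A\<close> by (simp_all add: nm_eq_iff)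
    ultimately show ?thesis
      using isogonal_eqs_if_isogonal_at[OF unit] isogonal_conjugate_not_vertex[OF nc that]
      by (simp add: nm_eq_iff)
  qed
  have "\<mu> / \<rho> \<noteq> 0"
    using \<open>\<mu> \<noteq> 0\<close> \<open>\<rho> > 0\<close> by simp
  moreover note conj[OF S', unfolded shift] conj[OF R', unfolded shift]
  ultimately have "nm S' \<noteq> nm R' \<and> (\<exists>k::real. nm S' - nm R' = k *\<^sub>R isogonal_dir (nm A) (nm B) (nm C) (nm T) u)"
    using isogonal_eqs_symmetric_points[OF unit \<open>nm T \<bullet> u = 0\<close> _ \<open>u \<noteq> 0\<close>] by blast
  then obtain k where "S' \<noteq> R'" "nm S' - nm R' = k *\<^sub>R isogonal_dir (nm A) (nm B) (nm C) (nm T) u"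
    using nm_eq_iff by blast
  moreover have "S' - R' = \<rho> *\<^sub>R (nm S' - nm R')"
    using \<open>\<rho> > 0\<close> by (simp add: nm_def scaleR_conv_of_real field_simps)
  ultimately show ?thesis
    by auto
qed

theorem proposition3p2:
  fixes A B C Oc p q T :: complex
  assumes "\<not> collinear {A, B, C}"
    and "dist Oc A = dist Oc B" and "dist Oc B = dist Oc C"
    and "p \<noteq> q"
    and "T \<in> line_through p q"
    and "(Oc - T) \<bullet> (q - p) = 0"
  shows "\<exists>d::complex. d \<noteq> 0 \<and>
     (\<forall>R S R' S'. R \<in> line_through p q \<longrightarrow> S \<in> line_through p q \<longrightarrow>
        dist T S = dist T R \<longrightarrow> S \<noteq> R \<longrightarrow>
        isogonal_conjugate A B C S S' \<longrightarrow> isogonal_conjugate A B C R R' \<longrightarrow>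
        S' \<noteq> R' \<and> (\<exists>k::real. S' - R' = k *\<^sub>R d))"
proof -
  define nm where "nm z = (z - Oc) / of_real (dist Oc A)" for z
  define d where "d = isogonal_dir (nm A) (nm B) (nm C) (nm T) (q - p)"
  have admissible: "S' \<noteq> R' \<and> (\<exists>k::real. S' - R' = k *\<^sub>R d)"
    if on_line: "R \<in> line_through p q" "S \<in> line_through p q" "dist T S = dist T R" "S \<noteq> R"
      "isogonal_conjugate A B C S S'" "isogonal_conjugate A B C R R'" for R S R' S'
  proof -
    obtain \<mu> where "\<mu> \<noteq> 0" and S: "S = T + of_real \<mu> * (q - p)" and R: "R = T - of_real \<mu> * (q - p)"
      using line_through_equidistant[OF assms(4,5) on_line(2,1,3,4)] by blast
    have "dist Oc B = dist Oc A" "dist Oc C = dist Oc A" "q - p \<noteq> 0"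
      using assms(2-4) by simp_all
    from isogonal_conjugates_symmetric_points[OF assms(1) refl this(1,2) assms(6) \<open>\<mu> \<noteq> 0\<close> this(3)]
    show ?thesis
      using on_line(5,6) unfolding S R d_def nm_def by blast
  qed
  show ?thesis
  proof (cases "d = 0")
    case False
    then show ?thesis
      using admissible by blast
  next
    case True
    \<comment> \<open>then no admissible pair exists, so any direction will do\<close>
    have no_admissible: False
      if "R \<in> line_through p q" "S \<in> line_through p q" "dist T S = dist T R" "S \<noteq> R"
        "isogonal_conjugate A B C S S'" "isogonal_conjugate A B C R R'" for R S R' S'
      using admissible[OF that] True by simp
    then show ?thesis
      by (intro exI[of _ 1]) (auto dest: no_admissible)
  qed
qed

end
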